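(* Let $\{\phi_m\}_{m\in\mathbb N}\subset L^1(\mathbb R^n_+,sr)$ satisfy: (1) $\phi_m\ge0$ on $\mathbb R^n_+$; (2) $\int_{\mathbb R^n_+}\phi_m(x)s(x)r(x)\,dx=1$ for all $m$; (3) for every $\eta>0$, $\lim_{m\to\infty}\int_{\|x\|>\eta}\phi_m(x)r(x)s(x)\,dx=0$. Let $f\in L^\infty(\mathbb R^n_+,r)$ be continuous at $x_0\in\mathbb R^n_+$. Then $\lim_{m\to\infty}(f\sharp\phi_m)(x_0)=f(x_0)$. Moreover, if $rf$ is uniformly continuous on $\mathbb R^n_+$, then $\lim_{m\to\infty}\|f\sharp\phi_m-f\|_{L^\infty(\mathbb R^n_+,r)}=0$.
   Context: $\mu=(\mu_1,\dots,\mu_n)$ with $\mu_i>-\tfrac12$; $\mathbb R^n_+=(0,\infty)^n$; $x^\beta=\prod_ix_i^{\beta_i}$; $C_\mu=\prod_i2^{\mu_i}\Gamma(\mu_i+1)$, $s(x)=x^{2\mu+1}/C_\mu$, $r(x)=x^{-\mu-1/2}$. $L^1(\mathbb R^n_+,sr)$ has norm $\int|f|sr\,dx$, $L^\infty(\mathbb R^n_+,r)$ has norm $\operatorname{ess\,sup}|rf|$. For $u,v,w>0$ with $|u-v|<w<u+v$ let $A(u,v,w)=\frac14\sqrt{[(u+v)^2-w^2][w^2-(u-v)^2]}$; for $\alpha>-\frac12$, $D_\alpha(u,v,w)=\frac{2^{\alpha-1}(uvw)^{-\alpha+1/2}}{\Gamma(\alpha+1/2)\sqrt\pi}A(u,v,w)^{2\alpha-1}$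 if $|u-v|<w<u+v$ and $0$ otherwise; $\mathbf D_\mu(x,y,z)=\prod_iD_{\mu_i}(x_i,y_i,z_i)$; $(f\sharp g)(x)=\int\int\mathbf D_\mu(x,y,z)f(y)g(z)\,dy\,dz$. *)

theory Defs
  imports "HOL-Analysis.Analysis" "HOL-Probability.Essential_Supremum"
begin

definition Rpos :: "(real^'n) set" where
  "Rpos = {x. \<forall>i. 0 < x $ i}"

definition Cmu :: "real^'n \<Rightarrow> real" where
  "Cmu \<mu> = (\<Prod>i\<in>UNIV. 2 powr (\<mu> $ i) * Gamma (\<mu> $ i + 1))"

definition sfun :: "real^'n \<Rightarrow> real^'n \<Rightarrow> real" where
  "sfun \<mu> x = (\<Prod>i\<in>UNIV. (x $ i) powr (2 * \<mu> $ i + 1)) / Cmu \<mu>"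

definition rfun :: "real^'n \<Rightarrow> real^'n \<Rightarrow> real" where
  "rfun \<mu> x = (\<Prod>i\<in>UNIV. (x $ i) powr (- \<mu> $ i - 1/2))"

definition Afun :: "real \<Rightarrow> real \<Rightarrow> real \<Rightarrow> real" where
  "Afun u v w = (1/4) * sqrt (((u + v)^2 - w^2) * (w^2 - (u - v)^2))"

definition Dfun :: "real \<Rightarrow> real \<Rightarrow> real \<Rightarrow> real \<Rightarrow> real" where
  "Dfun \<alpha> u v w =
     (if \<bar>u - v\<bar> < w \<and> w < u + v then
        2 powr (\<alpha> - 1) * (u * v * w) powr (- \<alpha> + 1/2)
          / (Gamma (\<alpha> + 1/2) * sqrt pi) * (Afun u v w) powr (2 * \<alpha> - 1)
      else 0)"

definition Dmu :: "real^'n \<Rightarrow> real^'n \<Rightarrow> real^'n \<Rightarrow> real^'n \<Rightarrow> real" where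
  "Dmu \<mu> x y z = (\<Prod>i\<in>UNIV. Dfun (\<mu> $ i) (x $ i) (y $ i) (z $ i))"

definition hconv :: "real^'n \<Rightarrow> (real^'n \<Rightarrow> real) \<Rightarrow> (real^'n \<Rightarrow> real) \<Rightarrow> real^'n \<Rightarrow> real" where
  "hconv \<mu> f g x =
     (LINT p : Rpos \<times> Rpos | (lborel \<Otimes>\<^sub>M lborel).
        Dmu \<mu> x (fst p) (snd p) * f (fst p) * g (snd p))"

definition in_L1_sr :: "real^'n \<Rightarrow> (real^'n \<Rightarrow> real) \<Rightarrow> bool" where
  "in_L1_sr \<mu> f \<longleftrightarrow> set_integrable lborel Rpos (\<lambda>x. f x * sfun \<mu> x * rfun \<mu> x)"

definition Linf_r_norm :: "real^'n \<Rightarrow> (real^'n \<Rightarrow> real) \<Rightarrow> ereal" where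
  "Linf_r_norm \<mu> f = esssup (restrict_space lborel Rpos) (\<lambda>x. ereal \<bar>rfun \<mu> x * f x\<bar>)"

definition in_Linf_r :: "real^'n \<Rightarrow> (real^'n \<Rightarrow> real) \<Rightarrow> bool" where
  "in_Linf_r \<mu> f \<longleftrightarrow> f \<in> borel_measurable (restrict_space lborel Rpos)
       \<and> Linf_r_norm \<mu> f < \<infinity>"

end

theory Submission
  imports Defs
begin

text \<open>
  Write \<open>\<rho> = 1/r\<close> (\<open>rinv\<close> below) and \<open>g = r f\<close>. On its support \<open>|u - w| < v < u + w\<close> the
  one-dimensional kernel becomes, after the substitution \<open>t = (v\<^sup>2 - (u - w)\<^sup>2) / (4 u w)\<close>, a
  Beta integral \<open>B(\<alpha> + 1/2, \<alpha> + 1/2)\<close>; with Legendre's duplication formula this gives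
  \<open>\<integral>\<^sub>0\<^sup>\<infinity> D\<^sub>\<alpha>(u,v,w) v\<^bsup>\<alpha>+1/2\<^esup> dv = (u w)\<^bsup>\<alpha>+1/2\<^esup> / (2\<^sup>\<alpha> \<Gamma>(\<alpha>+1))\<close>, and taking products,
  \<open>\<integral> D\<^sub>\<mu>(x,y,z) \<rho>(y) dy = \<rho>(x) \<rho>(z) / C\<^sub>\<mu>\<close>. By Tonelli the kernel \<open>D\<^sub>\<mu>(x,y,z) \<rho>(y) \<phi>(z)\<close> thus
  has mass \<open>\<rho>(x) \<integral> \<phi> s r = \<rho>(x)\<close>, so
  \<open>(f \<sharp> \<phi>)(x) - f(x) = \<integral>\<integral> D\<^sub>\<mu>(x,y,z) \<rho>(y) \<phi>(z) (g(y) - g(x)) dy dz\<close>.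
  Since \<open>D\<^sub>\<mu>(x,y,z) \<noteq> 0\<close> forces \<open>|y - x| < |z|\<close>, the factor \<open>|g(y) - g(x)|\<close> is at most the
  oscillation of \<open>g\<close> near \<open>x\<close> when \<open>|z| \<le> \<delta>\<close> and at most \<open>2 \<parallel>g\<parallel>\<^sub>\<infinity>\<close> otherwise, whence
  \<open>|(f \<sharp> \<phi>)(x) - f(x)| \<le> \<rho>(x) (\<epsilon> + 2 \<parallel>g\<parallel>\<^sub>\<infinity> \<integral>\<^bsub>|z|>\<delta>\<^esub> \<phi> r s)\<close>. The tail integral vanishes in the limit;
  uniform continuity of \<open>g\<close> makes the bound uniform after multiplying by \<open>r(x)\<close>.
\<close>

lemma open_Rpos: "open (Rpos :: (real^'n) set)"
proof -
  have eq: "(Rpos :: (real^'n) set) = (\<Inter>i. {x. 0 < x $ i})"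
    by (auto simp: Rpos_def)
  show ?thesis
    unfolding eq by (intro open_INT ballI open_Collect_less continuous_intros) simp
qed

lemma Rpos_sets [measurable]: "(Rpos :: (real^'n) set) \<in> sets borel"
  using open_Rpos by (rule borel_open)

lemma prod_Basis_cart:
  "(\<Prod>b\<in>(Basis :: (real^'n) set). h b) = (\<Prod>i\<in>UNIV. h (axis i 1))"
proof -
  have eq: "(Basis :: (real^'n) set) = range (\<lambda>i. axis i 1)"
    by (auto simp: Basis_vec_def)
  have "inj (\<lambda>i::'n. axis i (1::real))"
    by (auto simp: inj_on_def axis_eq_axis)
  then show ?thesis unfolding eq by (simp add: prod.reindex)
qed

lemma emeasure_Rpos_neq_0: "emeasure lborel (Rpos :: (real^'n) set) \<noteq> 0"
proof -
  have sub: "box (vec 1) (vec 2) \<subseteq> (Rpos :: (real^'n) set)"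
    by (auto simp: mem_box_cart Rpos_def) (smt (verit))
  have "emeasure lborel (box (vec 1) (vec 2) :: (real^'n) set) = 1"
  proof (subst emeasure_lborel_box)
    show "b \<in> Basis \<Longrightarrow> vec 1 \<bullet> b \<le> vec 2 \<bullet> b" for b :: "real^'n"
      by (auto simp: Basis_vec_def inner_axis)
    have "prod ((\<bullet>) (vec 2 - vec 1 :: real^'n)) Basis = 1"
      unfolding prod_Basis_cart by (simp add: inner_axis)
    then show "ennreal (prod ((\<bullet>) (vec 2 - vec 1 :: real^'n)) Basis) = 1" by simp
  qed
  moreover have "emeasure lborel (box (vec 1) (vec 2) :: (real^'n) set) \<le> emeasure lborel (Rpos :: (real^'n) set)"
    by (rule emeasure_mono[OF sub]) simp
  ultimately show ?thesis by auto
qed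

lemma measurable_vec_nth [measurable]:
  assumes [measurable]: "f \<in> borel_measurable M"
  shows "(\<lambda>x. (f x :: real^'n) $ i) \<in> borel_measurable M"
proof -
  have "(\<lambda>x::real^'n. x $ i) \<in> borel_measurable borel"
    by (intro borel_measurable_continuous_onI continuous_intros)
  then show ?thesis using measurable_compose[OF assms] by blast
qed

lemma Dfun_measurable [measurable]:
  assumes [measurable]: "f \<in> borel_measurable M" "g \<in> borel_measurable M" "h \<in> borel_measurable M"
  shows "(\<lambda>x. Dfun a (f x) (g x) (h x)) \<in> borel_measurable M"
  unfolding Dfun_def Afun_def by measurable

lemma Dmu_measurable [measurable]:
  assumes [measurable]: "f \<in> borel_measurable M" "g \<in> borel_measurable M" "h \<in> borel_measurable M"
  shows "(\<lambda>x. Dmu \<mu> (f x) (g x) (h x)) \<in> borel_measurable M"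
  unfolding Dmu_def by measurable

lemma rfun_measurable [measurable]: "rfun \<mu> \<in> borel_measurable borel"
  unfolding rfun_def by measurable

lemma Dfun_nonneg: "-1/2 < a \<Longrightarrow> 0 \<le> Dfun a u v w"
  unfolding Dfun_def by (auto intro!: divide_nonneg_pos mult_nonneg_nonneg Gamma_real_pos)

lemma Dmu_nonneg: "\<forall>i. -1/2 < \<mu> $ i \<Longrightarrow> 0 \<le> Dmu \<mu> x y z"
  unfolding Dmu_def by (intro prod_nonneg) (auto intro: Dfun_nonneg)

lemma Cmu_pos:
  assumes "\<forall>i. -1/2 < \<mu> $ i"
  shows "0 < Cmu \<mu>"
  unfolding Cmu_def
proof (intro prod_pos mult_pos_pos Gamma_real_pos)
  show "0 < \<mu> $ i + 1" for i
    using assms[rule_format, of i] by simp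
qed simp

definition rinv :: "real^'n \<Rightarrow> real^'n \<Rightarrow> real" where
  "rinv \<mu> y = (\<Prod>i\<in>UNIV. (y $ i) powr (\<mu> $ i + 1/2))"

lemma rinv_measurable [measurable]: "rinv \<mu> \<in> borel_measurable borel"
  unfolding rinv_def by measurable

lemma rinv_nonneg: "0 \<le> rinv \<mu> y"
  unfolding rinv_def by (intro prod_nonneg) auto

lemma rinv_pos: "y \<in> Rpos \<Longrightarrow> 0 < rinv \<mu> y"
  unfolding rinv_def Rpos_def by (intro prod_pos) (simp add: order_less_imp_not_eq2)

lemma rfun_pos: "y \<in> Rpos \<Longrightarrow> 0 < rfun \<mu> y"
  unfolding rfun_def Rpos_def by (intro prod_pos) (simp add: order_less_imp_not_eq2)

lemma rfun_nonneg: "0 \<le> rfun \<mu> y"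
  unfolding rfun_def by (intro prod_nonneg) auto

lemma sfun_nonneg: "\<forall>i. -1/2 < \<mu> $ i \<Longrightarrow> 0 \<le> sfun \<mu> y"
  unfolding sfun_def using Cmu_pos by (intro divide_nonneg_pos prod_nonneg) auto

lemma rfun_mult_rinv:
  assumes "y \<in> Rpos"
  shows "rfun \<mu> y * rinv \<mu> y = 1"
  unfolding rfun_def rinv_def prod.distrib[symmetric]
proof (intro prod.neutral ballI)
  fix i
  have "0 < y $ i" using assms by (simp add: Rpos_def)
  then show "y $ i powr (- \<mu> $ i - 1/2) * y $ i powr (\<mu> $ i + 1/2) = 1"
    by (simp add: powr_add[symmetric])
qed

lemma sfun_mult_rfun:
  assumes "y \<in> Rpos"
  shows "sfun \<mu> y * rfun \<mu> y = rinv \<mu> y / Cmu \<mu>"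
proof -
  have "y $ i powr (2 * \<mu> $ i + 1) * y $ i powr (- \<mu> $ i - 1/2) = y $ i powr (\<mu> $ i + 1/2)" for i
  proof -
    have "0 < y $ i" using assms by (simp add: Rpos_def)
    then show ?thesis by (simp add: powr_add[symmetric])
  qed
  then show ?thesis
    unfolding sfun_def rfun_def rinv_def times_divide_eq_left prod.distrib[symmetric] by simp
qed

definition heron :: "real \<Rightarrow> real \<Rightarrow> real \<Rightarrow> real" where
  "heron u w v = ((u + w)^2 - v^2) * (v^2 - (u - w)^2)"

lemma heron_measurable [measurable]: "heron u w \<in> borel_measurable borel"
  unfolding heron_def by measurable

lemma heron_pos:
  assumes "\<bar>u - w\<bar> < v" "v < u + w"
  shows "0 < heron u w v"
proof -
  have "0 \<le> \<bar>u - w\<bar>" by simp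
  then have "(u - w)^2 < v^2" "v^2 < (u + w)^2"
    using assms power_strict_mono[of "\<bar>u - w\<bar>" v 2] power_strict_mono[of v "u + w" 2] by auto
  then show ?thesis unfolding heron_def by simp
qed

lemma Dfun_mult_powr:
  fixes a u v w :: real
  assumes u: "0 < u" and w: "0 < w"
  defines "c \<equiv> 2 powr (a - 1) * (u * w) powr (1/2 - a) / (Gamma (a + 1/2) * sqrt pi) * (1/4) powr (2*a - 1)"
  shows "indicator {0<..} v * Dfun a u v w * v powr (a + 1/2)
       = c * (indicator {\<bar>u - w\<bar>..u + w} v * (v * heron u w v powr (a - 1/2)))"
proof (cases "\<bar>u - w\<bar> < v \<and> v < u + w")
  case True
  then have v: "0 < v" and supp: "\<bar>u - v\<bar> < w \<and> w < u + v" by auto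
  have h: "0 < heron u w v" using heron_pos True by blast
  have "((u + v)^2 - w^2) * (w^2 - (u - v)^2) = heron u w v"
    unfolding heron_def by algebra
  then have Aeq: "Afun u v w = 1/4 * sqrt (heron u w v)"
    by (simp add: Afun_def)
  have "Afun u v w powr (2*a - 1) = (1/4) powr (2*a - 1) * sqrt (heron u w v) powr (2*a - 1)"
    unfolding Aeq by (rule powr_mult)
  also have "sqrt (heron u w v) powr (2*a - 1) = heron u w v powr (a - 1/2)"
    using h by (simp add: powr_half_sqrt[symmetric] powr_powr algebra_simps)
  finally have A: "Afun u v w powr (2*a - 1) = (1/4) powr (2*a - 1) * heron u w v powr (a - 1/2)" .
  have P: "(u * v * w) powr (- a + 1/2) * v powr (a + 1/2) = (u * w) powr (1/2 - a) * v"
    using u v w by (simp add: powr_mult powr_add[symmetric] mult_ac)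
  have "indicator {0<..} v * Dfun a u v w * v powr (a + 1/2)
      = 2 powr (a - 1) / (Gamma (a + 1/2) * sqrt pi) * ((u * v * w) powr (- a + 1/2) * v powr (a + 1/2))
        * Afun u v w powr (2*a - 1)"
    using supp v by (simp add: Dfun_def)
  also have "\<dots> = c * (v * heron u w v powr (a - 1/2))"
    unfolding P A c_def by (simp add: field_simps)
  finally show ?thesis using True by simp
next
  case False
  have "heron u w v = 0" if "v \<in> {\<bar>u - w\<bar>..u + w}"
  proof -
    from False that have "v = \<bar>u - w\<bar> \<or> v = u + w" by auto
    then have "v^2 = (u - w)^2 \<or> v^2 = (u + w)^2" by auto
    then show ?thesis unfolding heron_def by auto
  qed
  moreover have "\<not> (0 < v \<and> \<bar>u - v\<bar> < w \<and> w < u + v)"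
    using False by auto
  ultimately show ?thesis by (auto simp: Dfun_def indicator_def)
qed

lemma heron_powr_eq_Beta_density:
  fixes u w v b :: real
  assumes u: "0 < u" and w: "0 < w" and v: "\<bar>u - w\<bar> \<le> v" "v \<le> u + w"
  defines "L \<equiv> 4 * u * w"
  defines "t \<equiv> (v^2 - (u - w)^2) / L"
  shows "t powr (b - 1) * (1 - t) powr (b - 1) * (L powr (2*b - 1) / 2) * (2 * v / L)
       = v * heron u w v powr (b - 1)"
proof -
  define x1 where "x1 = v^2 - (u - w)^2"
  define x2 where "x2 = (u + w)^2 - v^2"
  have L: "0 < L" using u w by (simp add: L_def)
  have "\<bar>u - w\<bar>^2 \<le> v^2" "v^2 \<le> (u + w)^2"
    using v power_mono[of "\<bar>u - w\<bar>" v 2] power_mono[of v "u + w" 2] by auto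
  then have x1: "0 \<le> x1" and x2: "0 \<le> x2" by (simp_all add: x1_def x2_def)
  have t: "t = x1 / L" "1 - x1 / L = x2 / L"
    using L u w by (simp_all add: t_def x1_def x2_def L_def field_simps power2_eq_square)
  have "L powr ((b - 1) + (b - 1) + 1) = L powr (b - 1) * L powr (b - 1) * L powr 1"
    by (simp only: powr_add)
  moreover have "(b - 1) + (b - 1) + 1 = 2*b - 1" by simp
  ultimately have Lp: "L powr (2*b - 1) = L powr (b - 1) * L powr (b - 1) * L"
    using L by simp
  have "t powr (b - 1) * (1 - t) powr (b - 1) * (L powr (2*b - 1) / 2) * (2 * v / L)
      = x1 powr (b - 1) * x2 powr (b - 1) * v"
    unfolding t Lp using L x1 x2 by (simp add: powr_divide field_simps)
  also have "\<dots> = v * heron u w v powr (b - 1)"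
    using x1 x2 by (simp add: heron_def x1_def x2_def powr_mult mult_ac)
  finally show ?thesis .
qed

lemma nn_integral_heron_powr:
  fixes u w b :: real
  assumes u: "0 < u" and w: "0 < w" and b: "0 < b"
  shows "(\<integral>\<^sup>+v. ennreal (indicator {\<bar>u - w\<bar>..u + w} v * (v * heron u w v powr (b - 1))) \<partial>lborel)
       = ennreal ((4 * u * w) powr (2*b - 1) / 2 * Beta b b)"
proof -
  define L where "L = 4 * u * w"
  have L: "0 < L" using u w by (simp add: L_def)
  define g where "g v = (v^2 - (u - w)^2) / L" for v
  define F where "F t = t powr (b - 1) * (1 - t) powr (b - 1) * (L powr (2*b - 1) / 2)" for t
  have g_ends: "g \<bar>u - w\<bar> = 0" "g (u + w) = 1"
    using L u w by (simp_all add: g_def L_def field_simps power2_eq_square)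
  have "(\<integral>\<^sup>+t. ennreal (F t * indicator {g \<bar>u - w\<bar>..g (u + w)} t) \<partial>lborel)
      = (\<integral>\<^sup>+v. ennreal (F (g v) * (2 * v / L) * indicator {\<bar>u - w\<bar>..u + w} v) \<partial>lborel)"
  proof (rule nn_integral_substitution)
    show "set_borel_measurable borel {g \<bar>u - w\<bar>..g (u + w)} F"
      unfolding F_def set_borel_measurable_def by measurable
    show "(g has_real_derivative 2 * x / L) (at x)" for x
      using L unfolding g_def by (auto intro!: derivative_eq_intros)
    show "continuous_on {\<bar>u - w\<bar>..u + w} (\<lambda>x. 2 * x / L)"
      by (intro continuous_intros) (use L in auto)
    show "0 \<le> 2 * x / L" if "x \<in> {\<bar>u - w\<bar>..u + w}" for x
      using that L by auto
  qed (use u w in simp)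
  also have "(\<lambda>v. ennreal (F (g v) * (2 * v / L) * indicator {\<bar>u - w\<bar>..u + w} v))
           = (\<lambda>v. ennreal (indicator {\<bar>u - w\<bar>..u + w} v * (v * heron u w v powr (b - 1))))"
  proof
    fix v
    show "ennreal (F (g v) * (2 * v / L) * indicator {\<bar>u - w\<bar>..u + w} v)
        = ennreal (indicator {\<bar>u - w\<bar>..u + w} v * (v * heron u w v powr (b - 1)))"
    proof (cases "v \<in> {\<bar>u - w\<bar>..u + w}")
      case True
      then show ?thesis
        using heron_powr_eq_Beta_density[OF u w, of v b] by (simp add: F_def g_def L_def)
    qed simp
  qed
  also have "(\<integral>\<^sup>+t. ennreal (F t * indicator {g \<bar>u - w\<bar>..g (u + w)} t) \<partial>lborel)
           = (\<integral>\<^sup>+t. ennreal (indicator {0..1} t * F t) \<partial>lborel)"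
    unfolding g_ends by (simp add: mult.commute)
  also have "\<dots> = ennreal (Beta b b * (L powr (2*b - 1) / 2))"
  proof (rule nn_integral_has_integral_lebesgue)
    show "0 \<le> F x" if "x \<in> {0..1}" for x using that L by (simp add: F_def)
    show "(F has_integral Beta b b * (L powr (2*b - 1) / 2)) {0..1}"
      unfolding F_def by (intro has_integral_mult_left has_integral_Beta_real b)
  qed
  finally show ?thesis by (simp add: L_def mult.commute)
qed

lemma Gamma_legendre_duplication_real:
  fixes x :: real
  assumes x: "0 < x"
  shows "Gamma x * Gamma (x + 1/2) = 2 powr (1 - 2*x) * sqrt pi * Gamma (2*x)"
proof -
  have not_nonpos: "complex_of_real y \<notin> \<int>\<^sub>\<le>\<^sub>0" if "0 < y" for y :: real
    using that by (auto elim!: nonpos_Ints_cases simp: complex_eq_iff)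
  have "complex_of_real (Gamma x * Gamma (x + 1/2))
      = Gamma (complex_of_real x) * Gamma (complex_of_real x + 1/2)"
    by (simp add: Gamma_complex_of_real[symmetric])
  also have "\<dots> = exp ((1 - 2 * complex_of_real x) * of_real (ln 2)) * of_real (sqrt pi)
                  * Gamma (2 * complex_of_real x)"
    using not_nonpos[of x] not_nonpos[of "x + 1/2"] x
    by (intro Gamma_legendre_duplication) simp_all
  also have "\<dots> = complex_of_real (2 powr (1 - 2*x) * sqrt pi * Gamma (2*x))"
    by (simp add: powr_def flip: exp_of_real Gamma_complex_of_real)
  finally show ?thesis by (simp only: of_real_eq_iff)
qed

lemma Dfun_kernel_constant:
  fixes a u w :: real
  assumes a: "-1/2 < a" and u: "0 < u" and w: "0 < w"
  shows "2 powr (a - 1) * (u * w) powr (1/2 - a) / (Gamma (a + 1/2) * sqrt pi) * (1/4) powr (2*a - 1)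
           * ((4 * u * w) powr (2*a) / 2 * Beta (a + 1/2) (a + 1/2))
         = (u * w) powr (a + 1/2) / (2 powr a * Gamma (a + 1))"
proof -
  define G where "G = Gamma (a + 1/2)"
  define K where "K = Gamma (2*a + 1)"
  define T where "T = 2 powr a"
  define P where "P = u * w"
  have pos: "0 < G" "0 < K" "0 < T" "0 < Gamma (a + 1)" "0 < P"
    using a u w by (simp_all add: G_def K_def T_def P_def)
  have "a + 1/2 + (a + 1/2) = 2*a + 1" by simp
  then have Beta: "Beta (a + 1/2) (a + 1/2) = G * G / K"
    unfolding Beta_def by (simp add: G_def K_def)
  have e: "a + 1/2 + 1/2 = a + 1" "1 - 2*(a + 1/2) = -(a + a)" "2*(a + 1/2) = 2*a + 1"
    by simp_all
  have "G * Gamma (a + 1) = 2 powr (-(a + a)) * sqrt pi * K"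
    using Gamma_legendre_duplication_real[of "a + 1/2"] a unfolding G_def K_def e by simp
  moreover have "2 powr (-(a + a)) = 1 / (T * T)"
    by (simp add: T_def powr_minus powr_add[symmetric] divide_simps)
  ultimately have dup: "sqrt pi * K = G * Gamma (a + 1) * T * T"
    using pos by (simp add: field_simps)
  have "(1/4::real) powr (2*a - 1) = 4 powr (1 - 2*a)"
    by (simp add: powr_divide powr_minus_divide[symmetric] powr_minus)
  then have pow: "P powr (1/2 - a) * (1/4) powr (2*a - 1) * (4 * P) powr (2*a) = 4 * P powr (a + 1/2)"
    by (simp add: powr_mult powr_add[symmetric] mult_ac)
  have "2 powr (a - 1) = T / 2" by (simp add: T_def powr_diff)
  then have "2 powr (a - 1) * P powr (1/2 - a) / (G * sqrt pi) * (1/4) powr (2*a - 1)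
             * ((4 * P) powr (2*a) / 2 * Beta (a + 1/2) (a + 1/2))
           = T * (P powr (1/2 - a) * (1/4) powr (2*a - 1) * (4 * P) powr (2*a)) * G / (4 * (sqrt pi * K))"
    unfolding Beta using pos by (simp add: field_simps)
  also have "\<dots> = P powr (a + 1/2) / (T * Gamma (a + 1))"
    unfolding pow dup using pos by (simp add: field_simps)
  finally show ?thesis by (simp add: G_def T_def P_def mult.assoc)
qed

lemma nn_integral_Dfun_powr:
  fixes a u w :: real
  assumes a: "-1/2 < a" and u: "0 < u" and w: "0 < w"
  shows "(\<integral>\<^sup>+v. ennreal (indicator {0<..} v * Dfun a u v w * v powr (a + 1/2)) \<partial>lborel)
       = ennreal ((u * w) powr (a + 1/2) / (2 powr a * Gamma (a + 1)))"
proof -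
  define c where "c = 2 powr (a - 1) * (u * w) powr (1/2 - a) / (Gamma (a + 1/2) * sqrt pi) * (1/4) powr (2*a - 1)"
  have b: "0 < a + 1/2" and c: "0 \<le> c" using a by (simp_all add: c_def)
  have "(\<integral>\<^sup>+v. ennreal (indicator {0<..} v * Dfun a u v w * v powr (a + 1/2)) \<partial>lborel)
      = (\<integral>\<^sup>+v. ennreal c * ennreal (indicator {\<bar>u - w\<bar>..u + w} v * (v * heron u w v powr (a - 1/2))) \<partial>lborel)"
    unfolding Dfun_mult_powr[OF u w] c_def[symmetric]
    by (intro nn_integral_cong ennreal_mult) (use c in \<open>auto simp: indicator_def\<close>)
  also have "\<dots> = ennreal c * ennreal ((4 * u * w) powr (2*a) / 2 * Beta (a + 1/2) (a + 1/2))"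
    using nn_integral_heron_powr[OF u w b] by (subst nn_integral_cmult) (auto simp del: Beta_def)
  also have "\<dots> = ennreal ((u * w) powr (a + 1/2) / (2 powr a * Gamma (a + 1)))"
    using Dfun_kernel_constant[OF a u w] c b by (simp add: c_def Beta_def flip: ennreal_mult)
  finally show ?thesis .
qed

lemma indicator_Rpos_eq_prod:
  "indicator Rpos y = (\<Prod>i\<in>UNIV. indicator {0<..} ((y :: real^'n) $ i) :: real)"
proof (cases "y \<in> Rpos")
  case False
  then obtain i where "\<not> 0 < y $ i" by (auto simp: Rpos_def)
  then have "(\<Prod>i\<in>UNIV. indicator {0<..} (y $ i) :: real) = 0"
    by (intro prod_zero) (auto intro!: exI[of _ i])
  then show ?thesis using False by simp
qed (auto simp: Rpos_def indicator_def)

lemma nn_integral_Dmu_rinv: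
  fixes \<mu> x z :: "real^'n"
  assumes \<mu>: "\<forall>i. -1/2 < \<mu> $ i" and x: "x \<in> Rpos" and z: "z \<in> Rpos"
  shows "(\<integral>\<^sup>+y. ennreal (indicator Rpos y * Dmu \<mu> x y z * rinv \<mu> y) \<partial>lborel)
       = ennreal (rinv \<mu> x * rinv \<mu> z / Cmu \<mu>)"
proof -
  define F where "F b t = ennreal (indicator {0<..} t * Dfun (\<mu> \<bullet> b) (x \<bullet> b) t (z \<bullet> b) * t powr (\<mu> \<bullet> b + 1/2))"
    for b :: "real^'n" and t :: real
  have nonneg: "0 \<le> indicator {0<..} t * Dfun (\<mu> $ i) (x $ i) t (z $ i) * t powr (\<mu> $ i + 1/2)" for i t
    using \<mu> by (auto intro!: mult_nonneg_nonneg Dfun_nonneg)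
  have "(\<lambda>y. ennreal (indicator Rpos y * Dmu \<mu> x y z * rinv \<mu> y)) = (\<lambda>y. \<Prod>b\<in>Basis. F b (y \<bullet> b))"
    unfolding prod_Basis_cart F_def inner_axis indicator_Rpos_eq_prod Dmu_def rinv_def
    by (simp add: prod.distrib[symmetric] prod_ennreal nonneg)
  then have "(\<integral>\<^sup>+y. ennreal (indicator Rpos y * Dmu \<mu> x y z * rinv \<mu> y) \<partial>lborel)
      = (\<Prod>b\<in>Basis. (\<integral>\<^sup>+t. F b t \<partial>lborel))"
    by (simp only:) (rule nn_integral_lborel_prod, auto simp: F_def)
  also have "\<dots> = (\<Prod>i\<in>UNIV. ennreal ((x $ i * z $ i) powr (\<mu> $ i + 1/2) / (2 powr (\<mu> $ i) * Gamma (\<mu> $ i + 1))))"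
    unfolding prod_Basis_cart F_def inner_axis
    using \<mu> x z by (intro prod.cong refl) (simp add: Rpos_def nn_integral_Dfun_powr)
  also have "\<dots> = ennreal (\<Prod>i\<in>UNIV. (x $ i * z $ i) powr (\<mu> $ i + 1/2) / (2 powr (\<mu> $ i) * Gamma (\<mu> $ i + 1)))"
  proof (intro prod_ennreal divide_nonneg_pos mult_pos_pos Gamma_real_pos)
    show "0 < \<mu> $ i + 1" for i using \<mu>[rule_format, of i] by simp
  qed simp_all
  also have "(\<Prod>i\<in>UNIV. (x $ i * z $ i) powr (\<mu> $ i + 1/2) / (2 powr (\<mu> $ i) * Gamma (\<mu> $ i + 1)))
      = rinv \<mu> x * rinv \<mu> z / Cmu \<mu>"
    unfolding rinv_def Cmu_def prod_dividef[symmetric] prod.distrib[symmetric]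
    using x z by (intro prod.cong refl) (auto simp: Rpos_def powr_mult)
  finally show ?thesis .
qed

lemma Dmu_neq_0_imp_dist_less:
  assumes "Dmu \<mu> x y z \<noteq> 0"
  shows "dist y x < norm z"
proof -
  have "\<bar>x $ i - y $ i\<bar> < \<bar>z $ i\<bar>" for i
  proof -
    have "Dfun (\<mu> $ i) (x $ i) (y $ i) (z $ i) \<noteq> 0"
      using assms unfolding Dmu_def by (metis UNIV_I finite prod_zero)
    then show ?thesis by (auto simp: Dfun_def split: if_splits)
  qed
  then have "((y - x) $ i)^2 < (z $ i)^2" for i
    by (metis abs_le_square_iff abs_minus_commute not_le vector_minus_component)
  then have "(\<Sum>i\<in>UNIV. ((y - x) $ i)^2) < (\<Sum>i\<in>UNIV. (z $ i)^2)"
    by (intro sum_strict_mono) auto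
  then show ?thesis
    by (simp add: dist_norm norm_vec_def L2_set_def)
qed

lemma AE_pair_measure_fst:
  assumes "sigma_finite_measure M2" "AE x in M1. P x"
  shows "AE p in M1 \<Otimes>\<^sub>M M2. P (fst p)"
proof -
  interpret M2: sigma_finite_measure M2 by fact
  obtain N where N: "N \<in> null_sets M1" "{x \<in> space M1. \<not> P x} \<subseteq> N"
    using assms(2) by (auto elim!: AE_E)
  have "emeasure (M1 \<Otimes>\<^sub>M M2) (N \<times> space M2) = emeasure M1 N * emeasure M2 (space M2)"
    using N by (intro M2.emeasure_pair_measure_Times) auto
  then have "N \<times> space M2 \<in> null_sets (M1 \<Otimes>\<^sub>M M2)"
    using N by (auto simp: null_sets_def)
  moreover have "{p \<in> space (M1 \<Otimes>\<^sub>M M2). \<not> P (fst p)} \<subseteq> N \<times> space M2"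
    using N by (auto simp: space_pair_measure)
  ultimately show ?thesis by (intro AE_I') auto
qed

lemma set_integrable_sfun_rfun_imp_measurable:
  assumes \<mu>: "\<forall>i. -1/2 < \<mu> $ i"
    and int: "set_integrable lborel Rpos (\<lambda>z. \<psi> z * sfun \<mu> z * rfun \<mu> z)"
  shows "(\<lambda>z. indicator Rpos z * \<psi> z) \<in> borel_measurable lborel"
proof -
  have [measurable]: "(\<lambda>z. indicator Rpos z *\<^sub>R (\<psi> z * sfun \<mu> z * rfun \<mu> z)) \<in> borel_measurable lborel"
    using int unfolding set_integrable_def by (rule borel_measurable_integrable)
  have "indicator Rpos z *\<^sub>R (\<psi> z * sfun \<mu> z * rfun \<mu> z) * (Cmu \<mu> / rinv \<mu> z)
      = indicator Rpos z * \<psi> z" for z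
  proof (cases "z \<in> Rpos")
    case True
    then show ?thesis
      using rinv_pos[OF True, of \<mu>] Cmu_pos[OF \<mu>] sfun_mult_rfun[OF True, of \<mu>] by (simp add: mult.assoc)
  qed simp
  moreover have "(\<lambda>z. indicator Rpos z *\<^sub>R (\<psi> z * sfun \<mu> z * rfun \<mu> z) * (Cmu \<mu> / rinv \<mu> z))
      \<in> borel_measurable lborel"
    by measurable
  ultimately show ?thesis by (simp only:)
qed

lemma nn_integral_Dmu_kernel_slice:
  fixes \<mu> x z :: "real^'n" and \<psi> :: "real^'n \<Rightarrow> real"
  assumes \<mu>: "\<forall>i. -1/2 < \<mu> $ i" and x: "x \<in> Rpos" and nonneg: "\<forall>z\<in>Rpos. 0 \<le> \<psi> z"
  shows "(\<integral>\<^sup>+y. ennreal (indicator (Rpos \<times> Rpos) (y, z) * Dmu \<mu> x y z * rinv \<mu> y * \<psi> z) \<partial>lborel)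
       = ennreal (rinv \<mu> x) * ennreal (indicator Rpos z * (\<psi> z * sfun \<mu> z * rfun \<mu> z))"
proof (cases "z \<in> Rpos")
  case True
  then have \<psi>z: "0 \<le> \<psi> z" using nonneg by blast
  have "(\<integral>\<^sup>+y. ennreal (indicator (Rpos \<times> Rpos) (y, z) * Dmu \<mu> x y z * rinv \<mu> y * \<psi> z) \<partial>lborel)
      = (\<integral>\<^sup>+y. ennreal (\<psi> z) * ennreal (indicator Rpos y * Dmu \<mu> x y z * rinv \<mu> y) \<partial>lborel)"
    using True \<psi>z \<mu>
    by (intro nn_integral_cong) (auto simp: indicator_def ennreal_mult'[symmetric] mult_ac
        intro!: mult_nonneg_nonneg Dmu_nonneg rinv_nonneg)
  also have "\<dots> = ennreal (\<psi> z) * ennreal (rinv \<mu> x * rinv \<mu> z / Cmu \<mu>)"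
    by (simp add: nn_integral_cmult nn_integral_Dmu_rinv[OF \<mu> x True])
  also have "\<dots> = ennreal (rinv \<mu> x * (\<psi> z * (rinv \<mu> z / Cmu \<mu>)))"
    using \<psi>z rinv_nonneg[of \<mu>] Cmu_pos[OF \<mu>]
    by (subst ennreal_mult[symmetric]) (simp_all add: mult_ac divide_nonneg_pos)
  also have "\<dots> = ennreal (rinv \<mu> x) * ennreal (indicator Rpos z * (\<psi> z * sfun \<mu> z * rfun \<mu> z))"
    using True mult_nonneg_nonneg[OF \<psi>z divide_nonneg_pos[OF rinv_nonneg Cmu_pos[OF \<mu>]]]
    by (subst ennreal_mult) (simp_all add: mult.assoc sfun_mult_rfun rinv_nonneg)
  finally show ?thesis .
qed simp

lemma has_bochner_integral_Dmu_kernel: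
  fixes \<mu> x :: "real^'n" and \<psi> :: "real^'n \<Rightarrow> real"
  assumes \<mu>: "\<forall>i. -1/2 < \<mu> $ i" and x: "x \<in> Rpos"
    and int: "set_integrable lborel Rpos (\<lambda>z. \<psi> z * sfun \<mu> z * rfun \<mu> z)"
    and nonneg: "\<forall>z\<in>Rpos. 0 \<le> \<psi> z"
  shows "has_bochner_integral (lborel \<Otimes>\<^sub>M lborel)
           (\<lambda>p. indicator (Rpos \<times> Rpos) p * Dmu \<mu> x (fst p) (snd p) * rinv \<mu> (fst p) * \<psi> (snd p))
           (rinv \<mu> x * (LINT z : Rpos | lborel. \<psi> z * sfun \<mu> z * rfun \<mu> z))"
proof -
  have psf: "pair_sigma_finite (lborel :: (real^'n) measure) (lborel :: (real^'n) measure)"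
    by (simp add: pair_sigma_finite_def lborel.sigma_finite_measure_axioms)
  define I where "I = (LINT z : Rpos | lborel. \<psi> z * sfun \<mu> z * rfun \<mu> z)"
  define \<psi>R where "\<psi>R z = indicator Rpos z * \<psi> z" for z
  define k where "k p = indicator (Rpos \<times> Rpos) p * Dmu \<mu> x (fst p) (snd p) * rinv \<mu> (fst p) * \<psi> (snd p)"
    for p :: "(real^'n) \<times> (real^'n)"
  have [measurable]: "\<psi>R \<in> borel_measurable lborel"
    using set_integrable_sfun_rfun_imp_measurable[OF \<mu> int] by (simp add: \<psi>R_def[abs_def])
  have \<psi>R_nonneg: "0 \<le> \<psi>R z" for z
    using nonneg by (simp add: \<psi>R_def indicator_def)
  have k_eq: "k p = Dmu \<mu> x (fst p) (snd p) * (indicator Rpos (fst p) * rinv \<mu> (fst p)) * \<psi>R (snd p)" for p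
    by (cases p) (simp add: k_def \<psi>R_def indicator_def)
  have [measurable]: "k \<in> borel_measurable (lborel \<Otimes>\<^sub>M lborel)"
    unfolding k_eq[abs_def] by measurable
  have k_nonneg: "0 \<le> k p" for p
    unfolding k_eq using \<mu> \<psi>R_nonneg by (intro mult_nonneg_nonneg Dmu_nonneg) (auto simp: rinv_nonneg)
  have I: "(\<integral>\<^sup>+z. ennreal (indicator Rpos z * (\<psi> z * sfun \<mu> z * rfun \<mu> z)) \<partial>lborel) = ennreal I" "0 \<le> I"
  proof -
    have "AE z in lborel. 0 \<le> indicator Rpos z * (\<psi> z * sfun \<mu> z * rfun \<mu> z)"
      using nonneg sfun_nonneg[OF \<mu>] rfun_nonneg
      by (intro AE_I2) (auto simp: indicator_def intro!: mult_nonneg_nonneg)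
    then show "(\<integral>\<^sup>+z. ennreal (indicator Rpos z * (\<psi> z * sfun \<mu> z * rfun \<mu> z)) \<partial>lborel) = ennreal I"
      "0 \<le> I"
      using int unfolding I_def set_integrable_def set_lebesgue_integral_def
      by (auto simp: nn_integral_eq_integral integral_nonneg_AE)
  qed
  have inner: "(\<integral>\<^sup>+y. ennreal (k (y, z)) \<partial>lborel)
      = ennreal (rinv \<mu> x) * ennreal (indicator Rpos z * (\<psi> z * sfun \<mu> z * rfun \<mu> z))" for z
    unfolding k_def using nn_integral_Dmu_kernel_slice[OF \<mu> x nonneg] by simp
  have [measurable]: "(\<lambda>z. indicator Rpos z * (\<psi> z * sfun \<mu> z * rfun \<mu> z)) \<in> borel_measurable lborel"
    using int unfolding set_integrable_def by (auto dest: borel_measurable_integrable)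
  have "integral\<^sup>N (lborel \<Otimes>\<^sub>M lborel) (\<lambda>p. ennreal (k p))
      = (\<integral>\<^sup>+z. \<integral>\<^sup>+y. ennreal (k (y, z)) \<partial>lborel \<partial>lborel)"
    by (rule pair_sigma_finite.nn_integral_snd[OF psf, symmetric]) measurable
  also have "\<dots> = (\<integral>\<^sup>+z. ennreal (rinv \<mu> x) * ennreal (indicator Rpos z * (\<psi> z * sfun \<mu> z * rfun \<mu> z)) \<partial>lborel)"
    by (simp only: inner)
  also have "\<dots> = ennreal (rinv \<mu> x * I)"
    using I by (subst nn_integral_cmult) (simp_all add: ennreal_mult[OF rinv_nonneg I(2)])
  finally have "integral\<^sup>N (lborel \<Otimes>\<^sub>M lborel) (\<lambda>p. ennreal (k p)) = ennreal (rinv \<mu> x * I)" .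
  then have "has_bochner_integral (lborel \<Otimes>\<^sub>M lborel) k (rinv \<mu> x * I)"
    using k_nonneg mult_nonneg_nonneg[OF rinv_nonneg I(2)] by (intro has_bochner_integral_nn_integral) auto
  then show ?thesis by (simp add: k_def[abs_def] I_def)
qed

lemma abs_integral_diff_le:
  fixes F G H :: "'a \<Rightarrow> real"
  assumes G: "has_bochner_integral M G a" and H: "has_bochner_integral M H b"
    and F [measurable]: "F \<in> borel_measurable M"
    and bound: "AE p in M. \<bar>F p - c * G p\<bar> \<le> H p"
  shows "\<bar>integral\<^sup>L M F - c * a\<bar> \<le> b"
proof -
  have Gi: "integrable M G" and Hi: "integrable M H" and "integral\<^sup>L M G = a" "integral\<^sup>L M H = b"
    using G H by (simp_all add: has_bochner_integral_iff)
  have [measurable]: "G \<in> borel_measurable M"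
    using Gi by (rule borel_measurable_integrable)
  have Di: "integrable M (\<lambda>p. F p - c * G p)"
  proof (rule Bochner_Integration.integrable_bound[OF Hi])
    show "(\<lambda>p. F p - c * G p) \<in> borel_measurable M" by measurable
    show "AE p in M. norm (F p - c * G p) \<le> norm (H p)"
      using bound by (rule eventually_mono) auto
  qed
  have "integrable M (\<lambda>p. (F p - c * G p) + c * G p)"
    using Di Gi by (intro Bochner_Integration.integrable_add integrable_mult_right)
  then have "integrable M F" by simp
  then have "integral\<^sup>L M F - c * a = integral\<^sup>L M (\<lambda>p. F p - c * G p)"
    using Gi \<open>integral\<^sup>L M G = a\<close> by simp
  also have "\<bar>\<dots>\<bar> \<le> integral\<^sup>L M (\<lambda>p. \<bar>F p - c * G p\<bar>)"
    by (rule integral_abs_bound)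
  also have "\<dots> \<le> integral\<^sup>L M H"
    using bound Hi Di by (intro integral_mono_AE) auto
  finally show ?thesis using \<open>integral\<^sup>L M H = b\<close> by simp
qed

lemma has_bochner_integral_tail_weight:
  fixes h :: "real^'n \<Rightarrow> real"
  assumes int: "set_integrable lborel Rpos h"
  shows "has_bochner_integral lborel
           (\<lambda>z. indicator Rpos z * (h z * (\<epsilon> + K * indicator {z. \<delta> < norm z} z)))
           (\<epsilon> * (LINT z : Rpos | lborel. h z) + K * (LINT z : {z\<in>Rpos. \<delta> < norm z} | lborel. h z))"
proof -
  have tail: "set_integrable lborel {z\<in>Rpos. \<delta> < norm z} h"
    using int by (rule set_integrable_subset) auto
  have "has_bochner_integral lborel
          (\<lambda>z. \<epsilon> * (indicator Rpos z * h z) + K * (indicator {z\<in>Rpos. \<delta> < norm z} z * h z))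
          (\<epsilon> * (LINT z : Rpos | lborel. h z) + K * (LINT z : {z\<in>Rpos. \<delta> < norm z} | lborel. h z))"
    using int tail unfolding set_integrable_def set_lebesgue_integral_def
    by (intro has_bochner_integral_add has_bochner_integral_mult_right) (auto simp: has_bochner_integral_iff)
  moreover have "\<epsilon> * (indicator Rpos z * h z) + K * (indicator {z\<in>Rpos. \<delta> < norm z} z * h z)
      = indicator Rpos z * (h z * (\<epsilon> + K * indicator {z. \<delta> < norm z} z))" for z
    by (simp add: indicator_def algebra_simps)
  ultimately show ?thesis by simp
qed

lemma AE_hconv_integrand_deviation_le:
  fixes \<mu> x :: "real^'n" and f \<phi> :: "real^'n \<Rightarrow> real"
  assumes \<mu>: "\<forall>i. -1/2 < \<mu> $ i" and \<phi>: "\<forall>z\<in>Rpos. 0 \<le> \<phi> z" and \<epsilon>: "0 \<le> \<epsilon>"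
    and far: "AE y in lborel. y \<in> Rpos \<longrightarrow> \<bar>rfun \<mu> y * f y - rfun \<mu> x * f x\<bar> \<le> K"
    and near: "AE y in lborel. y \<in> Rpos \<and> dist y x < \<delta> \<longrightarrow> \<bar>rfun \<mu> y * f y - rfun \<mu> x * f x\<bar> \<le> \<epsilon>"
  defines "k \<equiv> \<lambda>p. indicator (Rpos \<times> Rpos) p * Dmu \<mu> x (fst p) (snd p) * rinv \<mu> (fst p) * \<phi> (snd p)"
  shows "AE p in lborel \<Otimes>\<^sub>M lborel.
           \<bar>indicator (Rpos \<times> Rpos) p * (Dmu \<mu> x (fst p) (snd p) * f (fst p) * \<phi> (snd p)) - rfun \<mu> x * f x * k p\<bar>
           \<le> k p * (\<epsilon> + K * indicator {z. \<delta> < norm z} (snd p))"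
proof -
  have "AE y in lborel. (y \<in> Rpos \<longrightarrow> \<bar>rfun \<mu> y * f y - rfun \<mu> x * f x\<bar> \<le> K)
      \<and> (y \<in> Rpos \<and> dist y x < \<delta> \<longrightarrow> \<bar>rfun \<mu> y * f y - rfun \<mu> x * f x\<bar> \<le> \<epsilon>)"
    using far near by eventually_elim blast
  from AE_pair_measure_fst[OF lborel.sigma_finite_measure_axioms this]
  show ?thesis
  proof eventually_elim
    case (elim p)
    obtain y z where p: "p = (y, z)" by fastforce
    show ?case
    proof (cases "y \<in> Rpos \<and> z \<in> Rpos")
      case True
      have k: "0 \<le> k p"
        using True \<phi> \<mu> by (auto simp: k_def p intro!: mult_nonneg_nonneg Dmu_nonneg rinv_nonneg)
      have "\<bar>rfun \<mu> y * f y - rfun \<mu> x * f x\<bar> \<le> \<epsilon> + K * indicator {z. \<delta> < norm z} z" if "k p \<noteq> 0"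
      proof -
        from that have "dist y x < norm z"
          by (intro Dmu_neq_0_imp_dist_less[of \<mu>]) (auto simp: k_def p)
        then show ?thesis
          using True elim \<epsilon> by (cases "\<delta> < norm z") (auto simp: p)
      qed
      then have "k p * \<bar>rfun \<mu> y * f y - rfun \<mu> x * f x\<bar> \<le> k p * (\<epsilon> + K * indicator {z. \<delta> < norm z} z)"
        using k by (cases "k p = 0") (auto intro: mult_left_mono)
      moreover have "indicator (Rpos \<times> Rpos) p * (Dmu \<mu> x y z * f y * \<phi> z) - rfun \<mu> x * f x * k p
          = k p * (rfun \<mu> y * f y - rfun \<mu> x * f x)"
        using True rfun_mult_rinv[of y \<mu>] by (simp add: k_def p algebra_simps)
      ultimately show ?thesis using k by (simp add: abs_mult p)
    qed (auto simp: k_def p)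
  qed
qed

lemma hconv_deviation_le:
  fixes \<mu> x :: "real^'n" and f \<phi> :: "real^'n \<Rightarrow> real"
  assumes \<mu>: "\<forall>i. -1/2 < \<mu> $ i" and x: "x \<in> Rpos"
    and f: "f \<in> borel_measurable (restrict_space lborel Rpos)"
    and \<phi>_L1: "in_L1_sr \<mu> \<phi>" and \<phi>_nonneg: "\<forall>z\<in>Rpos. 0 \<le> \<phi> z"
    and \<phi>_int: "(LINT z : Rpos | lborel. \<phi> z * sfun \<mu> z * rfun \<mu> z) = 1"
    and K: "0 \<le> K" and \<epsilon>: "0 \<le> \<epsilon>"
    and far: "AE y in lborel. y \<in> Rpos \<longrightarrow> \<bar>rfun \<mu> y * f y - rfun \<mu> x * f x\<bar> \<le> K"
    and near: "AE y in lborel. y \<in> Rpos \<and> dist y x < \<delta> \<longrightarrow> \<bar>rfun \<mu> y * f y - rfun \<mu> x * f x\<bar> \<le> \<epsilon>"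
  shows "\<bar>hconv \<mu> f \<phi> x - f x\<bar>
         \<le> rinv \<mu> x * (\<epsilon> + K * (LINT z : {z\<in>Rpos. \<delta> < norm z} | lborel. \<phi> z * rfun \<mu> z * sfun \<mu> z))"
proof -
  define w where "w z = \<epsilon> + K * indicator {z. \<delta> < norm z} z" for z :: "real^'n"
  define k where "k p = indicator (Rpos \<times> Rpos) p * Dmu \<mu> x (fst p) (snd p) * rinv \<mu> (fst p) * \<phi> (snd p)"
    for p :: "(real^'n) \<times> (real^'n)"
  have \<phi>_set: "set_integrable lborel Rpos (\<lambda>z. \<phi> z * sfun \<mu> z * rfun \<mu> z)"
    using \<phi>_L1 by (simp add: in_L1_sr_def)
  have [measurable]: "(\<lambda>z. indicator Rpos z * \<phi> z) \<in> borel_measurable lborel"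
    by (rule set_integrable_sfun_rfun_imp_measurable[OF \<mu> \<phi>_set])
  have [measurable]: "(\<lambda>y. indicator Rpos y * f y) \<in> borel_measurable lborel"
    using f by (subst (asm) borel_measurable_restrict_space_iff) auto
  have [measurable]: "w \<in> borel_measurable lborel"
    unfolding w_def by measurable
  have "has_bochner_integral lborel (\<lambda>z. indicator Rpos z * (\<phi> z * sfun \<mu> z * rfun \<mu> z * w z))
     (\<epsilon> + K * (LINT z : {z\<in>Rpos. \<delta> < norm z} | lborel. \<phi> z * rfun \<mu> z * sfun \<mu> z))"
    using has_bochner_integral_tail_weight[OF \<phi>_set, of \<epsilon> K \<delta>] \<phi>_int
    by (simp add: w_def mult_ac)
  then have w_set: "set_integrable lborel Rpos (\<lambda>z. (\<phi> z * w z) * sfun \<mu> z * rfun \<mu> z)"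
    and w_int: "(LINT z : Rpos | lborel. (\<phi> z * w z) * sfun \<mu> z * rfun \<mu> z)
              = \<epsilon> + K * (LINT z : {z\<in>Rpos. \<delta> < norm z} | lborel. \<phi> z * rfun \<mu> z * sfun \<mu> z)"
    by (auto simp: set_integrable_def set_lebesgue_integral_def has_bochner_integral_iff mult_ac)
  have \<phi>w_nonneg: "\<forall>z\<in>Rpos. 0 \<le> \<phi> z * w z"
    using \<phi>_nonneg K \<epsilon> by (simp add: w_def)
  have G: "has_bochner_integral (lborel \<Otimes>\<^sub>M lborel) k (rinv \<mu> x)"
    using has_bochner_integral_Dmu_kernel[OF \<mu> x \<phi>_set \<phi>_nonneg] \<phi>_int by (simp add: k_def[abs_def])
  have H: "has_bochner_integral (lborel \<Otimes>\<^sub>M lborel) (\<lambda>p. k p * w (snd p))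
      (rinv \<mu> x * (\<epsilon> + K * (LINT z : {z\<in>Rpos. \<delta> < norm z} | lborel. \<phi> z * rfun \<mu> z * sfun \<mu> z)))"
    using has_bochner_integral_Dmu_kernel[OF \<mu> x w_set \<phi>w_nonneg] w_int
    by (simp add: k_def mult_ac)
  have bound: "AE p in lborel \<Otimes>\<^sub>M lborel.
      \<bar>indicator (Rpos \<times> Rpos) p * (Dmu \<mu> x (fst p) (snd p) * f (fst p) * \<phi> (snd p)) - rfun \<mu> x * f x * k p\<bar>
      \<le> k p * w (snd p)"
    using AE_hconv_integrand_deviation_le[OF \<mu> \<phi>_nonneg \<epsilon> far near] by (simp add: k_def w_def)
  have "(\<lambda>p. indicator (Rpos \<times> Rpos) p * (Dmu \<mu> x (fst p) (snd p) * f (fst p) * \<phi> (snd p)))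
      = (\<lambda>p. Dmu \<mu> x (fst p) (snd p) * (indicator Rpos (fst p) * f (fst p)) * (indicator Rpos (snd p) * \<phi> (snd p)))"
    by (auto simp: fun_eq_iff indicator_def)
  then have "(\<lambda>p. indicator (Rpos \<times> Rpos) p * (Dmu \<mu> x (fst p) (snd p) * f (fst p) * \<phi> (snd p)))
      \<in> borel_measurable (lborel \<Otimes>\<^sub>M lborel)"
    by simp
  from abs_integral_diff_le[OF G H this bound]
  show ?thesis
    using rfun_mult_rinv[OF x, of \<mu>] by (simp add: hconv_def set_lebesgue_integral_def mult_ac)
qed

lemma continuous_rfun: "x \<in> Rpos \<Longrightarrow> continuous (at x within Rpos) (rfun \<mu>)"
  unfolding rfun_def Rpos_def by (intro continuous_intros) (auto, metis less_irrefl)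

lemma hconv_measurable:
  fixes \<mu> :: "real^'n" and f \<phi> :: "real^'n \<Rightarrow> real"
  assumes \<mu>: "\<forall>i. -1/2 < \<mu> $ i"
    and f: "f \<in> borel_measurable (restrict_space lborel Rpos)" and \<phi>: "in_L1_sr \<mu> \<phi>"
  shows "hconv \<mu> f \<phi> \<in> borel_measurable lborel"
proof -
  define fR where "fR y = indicator Rpos y * f y" for y
  define \<phi>R where "\<phi>R z = indicator Rpos z * \<phi> z" for z
  have [measurable]: "fR \<in> borel_measurable lborel"
    using f unfolding fR_def[abs_def] by (subst (asm) borel_measurable_restrict_space_iff) auto
  have [measurable]: "\<phi>R \<in> borel_measurable lborel"
    using set_integrable_sfun_rfun_imp_measurable[OF \<mu>] \<phi> by (simp add: \<phi>R_def[abs_def] in_L1_sr_def)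
  have "hconv \<mu> f \<phi> = (\<lambda>x. integral\<^sup>L (lborel \<Otimes>\<^sub>M lborel) (\<lambda>p. Dmu \<mu> x (fst p) (snd p) * fR (fst p) * \<phi>R (snd p)))"
    unfolding hconv_def set_lebesgue_integral_def
    by (intro ext Bochner_Integration.integral_cong) (auto simp: fR_def \<phi>R_def indicator_def)
  also have "\<dots> \<in> borel_measurable lborel"
  proof (rule sigma_finite_measure.borel_measurable_lebesgue_integral)
    show "sigma_finite_measure (lborel \<Otimes>\<^sub>M lborel :: ((real^'n) \<times> (real^'n)) measure)"
      by (intro sigma_finite_pair_measure lborel.sigma_finite_measure_axioms)
    have "(\<lambda>q. Dmu \<mu> (fst q) (fst (snd q)) (snd (snd q)) * fR (fst (snd q)) * \<phi>R (snd (snd q)))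
      \<in> borel_measurable (lborel \<Otimes>\<^sub>M ((lborel :: (real^'n) measure) \<Otimes>\<^sub>M (lborel :: (real^'n) measure)))"
      by measurable
    then show "case_prod (\<lambda>x p. Dmu \<mu> x (fst p) (snd p) * fR (fst p) * \<phi>R (snd p))
      \<in> borel_measurable (lborel \<Otimes>\<^sub>M (lborel \<Otimes>\<^sub>M lborel))"
      by (simp add: split_beta')
  qed
  finally show ?thesis .
qed

lemma in_Linf_r_AE_bound:
  assumes "in_Linf_r \<mu> f"
  obtains M where "0 \<le> M" "AE y in lborel. y \<in> Rpos \<longrightarrow> \<bar>rfun \<mu> y * f y\<bar> \<le> M"
proof -
  define M where "M = real_of_ereal (max (Linf_r_norm \<mu> f) 0)"
  have M: "max (Linf_r_norm \<mu> f) 0 = ereal M"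
    using assms unfolding M_def in_Linf_r_def
    by (cases "Linf_r_norm \<mu> f") (auto simp: max_def zero_ereal_def)
  have "AE y in restrict_space lborel Rpos. ereal \<bar>rfun \<mu> y * f y\<bar> \<le> Linf_r_norm \<mu> f"
    unfolding Linf_r_norm_def by (rule esssup_AE)
  then have "AE y in restrict_space lborel Rpos. \<bar>rfun \<mu> y * f y\<bar> \<le> M"
    by eventually_elim (metis M ereal_less_eq(3) max.coboundedI1)
  then have "AE y in lborel. y \<in> Rpos \<longrightarrow> \<bar>rfun \<mu> y * f y\<bar> \<le> M"
    by (subst (asm) AE_restrict_space_iff) auto
  moreover have "0 \<le> M"
    using M by (metis ereal_less_eq(5) max.cobounded2)
  ultimately show ?thesis using that by blast
qed

lemma Linf_r_norm_nonneg:
  fixes \<mu> :: "real^'n" and h :: "real^'n \<Rightarrow> real"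
  shows "0 \<le> Linf_r_norm \<mu> h"
proof -
  let ?M = "restrict_space lborel (Rpos :: (real^'n) set)"
  have "emeasure ?M (space ?M) \<noteq> 0"
    using emeasure_Rpos_neq_0 by (simp add: emeasure_restrict_space space_restrict_space)
  then have "0 = esssup ?M (\<lambda>_. (0 :: ereal))"
    by (rule esssup_const[symmetric])
  also have "\<dots> \<le> Linf_r_norm \<mu> h"
    unfolding Linf_r_norm_def by (rule esssup_mono) auto
  finally show ?thesis .
qed

lemma Linf_r_norm_le:
  assumes h: "h \<in> borel_measurable (restrict_space lborel Rpos)"
    and bound: "AE y in lborel. y \<in> Rpos \<longrightarrow> \<bar>rfun \<mu> y * h y\<bar> \<le> e"
  shows "Linf_r_norm \<mu> h \<le> ereal e"
  unfolding Linf_r_norm_def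
proof (rule esssup_I)
  have [measurable]: "rfun \<mu> \<in> borel_measurable (restrict_space lborel Rpos)"
    by (rule measurable_restrict_space1) simp
  show "(\<lambda>y. ereal \<bar>rfun \<mu> y * h y\<bar>) \<in> borel_measurable (restrict_space lborel Rpos)"
    using h by measurable
  show "AE y in restrict_space lborel Rpos. ereal \<bar>rfun \<mu> y * h y\<bar> \<le> ereal e"
    using bound by (subst AE_restrict_space_iff) auto
qed

lemma ereal_tendsto_0I:
  fixes S :: "nat \<Rightarrow> ereal"
  assumes nonneg: "\<And>m. 0 \<le> S m" and le: "\<And>e. 0 < e \<Longrightarrow> eventually (\<lambda>m. S m \<le> ereal e) sequentially"
  shows "S \<longlonglongrightarrow> 0"
proof (rule order_tendstoI)
  fix a :: ereal assume "a < 0"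
  then show "eventually (\<lambda>m. a < S m) sequentially"
    using nonneg by (auto intro: always_eventually less_le_trans)
next
  fix a :: ereal assume "0 < a"
  then obtain e where "0 < ereal e" "ereal e < a" using ereal_dense2 by blast
  with le[of e] show "eventually (\<lambda>m. S m < a) sequentially"
    by (auto elim: eventually_mono intro: le_less_trans)
qed

locale approximate_identity =
  fixes \<mu> :: "real^'n" and \<phi> :: "nat \<Rightarrow> real^'n \<Rightarrow> real"
  assumes mu: "\<forall>i. -1/2 < \<mu> $ i"
    and phi_L1: "in_L1_sr \<mu> (\<phi> m)"
    and phi_nonneg: "\<forall>x\<in>Rpos. 0 \<le> \<phi> m x"
    and phi_int: "(LINT x : Rpos | lborel. \<phi> m x * sfun \<mu> x * rfun \<mu> x) = 1"
    and phi_conc: "0 < \<eta> \<Longrightarrow>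
      (\<lambda>m. LINT x : {x\<in>Rpos. \<eta> < norm x} | lborel. \<phi> m x * rfun \<mu> x * sfun \<mu> x) \<longlonglongrightarrow> 0"
begin

lemma eventually_tail_le:
  assumes "0 < \<delta>" "0 < \<epsilon>"
  shows "eventually (\<lambda>m. K * (LINT x : {x\<in>Rpos. \<delta> < norm x} | lborel. \<phi> m x * rfun \<mu> x * sfun \<mu> x) \<le> \<epsilon>)
           sequentially"
proof -
  have "(\<lambda>m. K * (LINT x : {x\<in>Rpos. \<delta> < norm x} | lborel. \<phi> m x * rfun \<mu> x * sfun \<mu> x)) \<longlonglongrightarrow> 0"
    using tendsto_mult_left[OF phi_conc[OF assms(1)], of K] by simp
  from order_tendstoD(2)[OF this assms(2)] show ?thesis
    by eventually_elim simp
qed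

lemma hconv_tendsto:
  assumes f: "in_Linf_r \<mu> f" and x0: "x0 \<in> Rpos" and cont: "continuous (at x0 within Rpos) f"
  shows "(\<lambda>m. hconv \<mu> f (\<phi> m) x0) \<longlonglongrightarrow> f x0"
proof (rule tendstoI)
  fix e :: real assume e: "0 < e"
  define g where "g y = rfun \<mu> y * f y" for y
  obtain M where M: "0 \<le> M" "AE y in lborel. y \<in> Rpos \<longrightarrow> \<bar>g y\<bar> \<le> M"
    using in_Linf_r_AE_bound[OF f] unfolding g_def by blast
  define \<epsilon> where "\<epsilon> = e / (3 * rinv \<mu> x0)"
  have \<epsilon>: "0 < \<epsilon>" using e rinv_pos[OF x0] by (simp add: \<epsilon>_def)
  have "continuous (at x0 within Rpos) g"
    unfolding g_def[abs_def] by (intro continuous_mult continuous_rfun x0 cont)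
  then obtain \<delta> where \<delta>: "0 < \<delta>" and near: "\<forall>y\<in>Rpos. dist y x0 < \<delta> \<longrightarrow> dist (g y) (g x0) < \<epsilon>"
    using \<epsilon> unfolding continuous_within_eps_delta by blast
  have far: "AE y in lborel. y \<in> Rpos \<longrightarrow> \<bar>g y - g x0\<bar> \<le> M + \<bar>g x0\<bar>"
    using M(2) by eventually_elim auto
  show "eventually (\<lambda>m. dist (hconv \<mu> f (\<phi> m) x0) (f x0) < e) sequentially"
    using eventually_tail_le[OF \<delta> \<epsilon>, of "M + \<bar>g x0\<bar>"]
  proof eventually_elim
    case (elim m)
    have "\<bar>hconv \<mu> f (\<phi> m) x0 - f x0\<bar>
        \<le> rinv \<mu> x0 * (\<epsilon> + (M + \<bar>g x0\<bar>) * (LINT z : {z\<in>Rpos. \<delta> < norm z} | lborel. \<phi> m z * rfun \<mu> z * sfun \<mu> z))"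
      using f x0 M(1) \<epsilon> far near unfolding g_def in_Linf_r_def
      by (intro hconv_deviation_le[OF mu _ _ phi_L1 phi_nonneg phi_int]) (auto simp: dist_real_def less_imp_le)
    also have "\<dots> \<le> rinv \<mu> x0 * (2 * \<epsilon>)"
      using elim rinv_nonneg[of \<mu> x0] by (intro mult_left_mono) auto
    also have "\<dots> < e"
      using e rinv_pos[OF x0] by (simp add: \<epsilon>_def)
    finally show ?case by (simp add: dist_real_def)
  qed
qed

lemma eventually_Linf_r_norm_hconv_diff_le:
  assumes f: "in_Linf_r \<mu> f" and uc: "uniformly_continuous_on Rpos (\<lambda>x. rfun \<mu> x * f x)"
    and e: "0 < e"
  shows "eventually (\<lambda>m. Linf_r_norm \<mu> (\<lambda>x. hconv \<mu> f (\<phi> m) x - f x) \<le> ereal e) sequentially"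
proof -
  define g where "g y = rfun \<mu> y * f y" for y
  have f_meas [measurable]: "f \<in> borel_measurable (restrict_space lborel Rpos)"
    using f by (simp add: in_Linf_r_def)
  obtain M where M: "0 \<le> M" "AE y in lborel. y \<in> Rpos \<longrightarrow> \<bar>g y\<bar> \<le> M"
    using in_Linf_r_AE_bound[OF f] unfolding g_def by blast
  obtain \<delta> where \<delta>: "0 < \<delta>" and near: "\<forall>x\<in>Rpos. \<forall>y\<in>Rpos. dist y x < \<delta> \<longrightarrow> dist (g y) (g x) < e/2"
    using uc e unfolding uniformly_continuous_on_def g_def[abs_def] by (metis half_gt_zero)
  let ?T = "\<lambda>m. LINT z : {z\<in>Rpos. \<delta> < norm z} | lborel. \<phi> m z * rfun \<mu> z * sfun \<mu> z"
  show ?thesis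
    using eventually_tail_le[OF \<delta> half_gt_zero[OF e], of "2 * M"]
  proof eventually_elim
    case (elim m)
    have [measurable]: "hconv \<mu> f (\<phi> m) \<in> borel_measurable (restrict_space lborel Rpos)"
      by (rule measurable_restrict_space1) (rule hconv_measurable[OF mu f_meas phi_L1])
    have pointwise: "\<bar>rfun \<mu> x * (hconv \<mu> f (\<phi> m) x - f x)\<bar> \<le> e"
      if x: "x \<in> Rpos" and gx: "\<bar>g x\<bar> \<le> M" for x
    proof -
      have far: "AE y in lborel. y \<in> Rpos \<longrightarrow> \<bar>g y - g x\<bar> \<le> 2 * M"
        using M(2) by eventually_elim (use gx in auto)
      have "\<bar>hconv \<mu> f (\<phi> m) x - f x\<bar> \<le> rinv \<mu> x * (e/2 + 2 * M * ?T m)"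
        using x M(1) e far near unfolding g_def
        by (intro hconv_deviation_le[OF mu _ f_meas phi_L1 phi_nonneg phi_int]) (auto simp: dist_real_def less_imp_le)
      then have "rfun \<mu> x * \<bar>hconv \<mu> f (\<phi> m) x - f x\<bar> \<le> rfun \<mu> x * (rinv \<mu> x * (e/2 + 2 * M * ?T m))"
        by (rule mult_left_mono) (rule rfun_nonneg)
      also have "\<dots> = e/2 + 2 * M * ?T m"
        using rfun_mult_rinv[OF x, of \<mu>] by (simp add: mult.assoc[symmetric])
      also have "\<dots> \<le> e"
        using elim by simp
      finally show ?thesis
        using rfun_pos[OF x, of \<mu>] by (simp add: abs_mult)
    qed
    have "AE x in lborel. x \<in> Rpos \<longrightarrow> \<bar>rfun \<mu> x * (hconv \<mu> f (\<phi> m) x - f x)\<bar> \<le> e"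
      using M(2) by eventually_elim (auto intro: pointwise)
    then show ?case
      by (rule Linf_r_norm_le[rotated]) measurable
  qed
qed

lemma Linf_r_norm_hconv_diff_tendsto:
  assumes "in_Linf_r \<mu> f" "uniformly_continuous_on Rpos (\<lambda>x. rfun \<mu> x * f x)"
  shows "(\<lambda>m. Linf_r_norm \<mu> (\<lambda>x. hconv \<mu> f (\<phi> m) x - f x)) \<longlonglongrightarrow> 0"
  using Linf_r_norm_nonneg eventually_Linf_r_norm_hconv_diff_le[OF assms]
  by (rule ereal_tendsto_0I)

end

theorem lemma3p5:
  fixes \<mu> :: "real^'n" and \<phi> :: "nat \<Rightarrow> real^'n \<Rightarrow> real"
    and f :: "real^'n \<Rightarrow> real" and x0 :: "real^'n"
  assumes mu: "\<forall>i. \<mu> $ i > - 1/2"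
    and phiL1: "\<forall>m. in_L1_sr \<mu> (\<phi> m)"
    and phi_nonneg: "\<forall>m. \<forall>x\<in>Rpos. \<phi> m x \<ge> 0"
    and phi_int: "\<forall>m. (LINT x : Rpos | lborel. \<phi> m x * sfun \<mu> x * rfun \<mu> x) = 1"
    and phi_conc: "\<forall>\<eta>>0. (\<lambda>m. LINT x : {x\<in>Rpos. norm x > \<eta>} | lborel.
                          \<phi> m x * rfun \<mu> x * sfun \<mu> x) \<longlonglongrightarrow> 0"
    and fLinf: "in_Linf_r \<mu> f"
    and x0: "x0 \<in> Rpos"
    and fcont: "continuous (at x0 within Rpos) f"
  shows "(\<lambda>m. hconv \<mu> f (\<phi> m) x0) \<longlonglongrightarrow> f x0
         \<and> (uniformly_continuous_on Rpos (\<lambda>x. rfun \<mu> x * f x) \<longrightarrow>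
              (\<lambda>m. Linf_r_norm \<mu> (\<lambda>x. hconv \<mu> f (\<phi> m) x - f x)) \<longlonglongrightarrow> 0)"
proof -
  interpret approximate_identity \<mu> \<phi>
    using assms by unfold_locales auto
  show ?thesis
    using hconv_tendsto[OF fLinf x0 fcont] Linf_r_norm_hconv_diff_tendsto[OF fLinf] by blast
qed

end
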